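(* Let $\alpha>1$ be an integer and $\lambda_\alpha>0$, and let $y_1,y_2,\dots$ be i.i.d. Erlang random variables with shape $\alpha$ and rate $\lambda_\alpha$ (i.e. sums of $\alpha$ independent exponentials of rate $\lambda_\alpha$). With $\tau(b)=\min\{n\ge1:\sum_{i=1}^n y_i>b\}$, as $b\to\infty$, $$\operatorname{Var}(\tau(b))=\frac{\lambda_\alpha b}{\alpha^2}+\frac{1}{12}\Big(1-\frac{1}{\alpha^2}\Big)+o(1).$$ *)

theory Defs
  imports "HOL-Probability.Probability"
begin

definition first_passage :: "(nat \<Rightarrow> 'a \<Rightarrow> real) \<Rightarrow> real \<Rightarrow> 'a \<Rightarrow> nat" where
  "first_passage Y b \<omega> = (LEAST n. n \<ge> 1 \<and> (\<Sum>i=1..n. Y i \<omega>) > b)"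

end

theory Submission
  imports Defs
begin

(* If Y 1, Y 2, ... are i.i.d. Erlang with shape alpha and rate l, the partial sums S_n are the
   arrival times of every alpha-th event of a Poisson process of rate l.  Hence S_n <= b iff
   N < n alpha, where N ~ Poisson(mu), mu = l b, counts the events in [0, b], and the passage time
   tau(b) = min {n >= 1. S_n > b} has the law of 1 + N div alpha.

   Writing N = alpha (N div alpha) + R with R = N mod alpha gives
     alpha^2 Var(1 + N div alpha) = Var N - 2 Cov(N, R) + Var R.
   Here Var N = mu, and the Stein-Chen identity E[N g(N)] = mu E[g(N + 1)] gives
   Cov(N, R) = mu (1 - alpha P(R = alpha - 1)).  A roots-of-unity filter shows that every residue
   class has probability 1/alpha + O(exp(-c mu)), so Cov(N, R) -> 0 and Var R tends to
   (alpha^2 - 1)/12, the variance of the uniform law on {0, ..., alpha - 1}. *)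

(* The Poisson(mu) probabilities, as a total function of mu so that series identities
   need no side condition; for mu > 0 they are the masses of poisson_pmf mu. *)
definition poisson_weight :: "real \<Rightarrow> nat \<Rightarrow> real" where
  "poisson_weight \<mu> i = \<mu> ^ i / fact i * exp (- \<mu>)"

lemma poisson_weight_nonneg: "\<mu> \<ge> 0 \<Longrightarrow> poisson_weight \<mu> i \<ge> 0"
  by (simp add: poisson_weight_def)

lemma poisson_weight_sums: "poisson_weight \<mu> sums 1"
proof -
  have "(\<lambda>i. \<mu> ^ i /\<^sub>R fact i * exp (- \<mu>)) sums (exp \<mu> * exp (- \<mu>))"
    by (rule sums_mult2[OF exp_converges])
  thus ?thesis
    by (simp add: poisson_weight_def[abs_def] exp_minus_inverse divide_inverse mult_ac)
qed

(* Stein-Chen identity: E[N g(N)] = mu E[g(N + 1)] for N ~ Poisson(mu).  It yields all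
   moments below, in particular the covariance of N with its residue modulo a. *)
lemma poisson_stein_identity:
  assumes "(\<lambda>i. poisson_weight \<mu> i * g (Suc i)) sums s"
  shows "(\<lambda>i. poisson_weight \<mu> i * real i * g i) sums (\<mu> * s)"
proof -
  have step: "poisson_weight \<mu> (Suc i) * real (Suc i) = \<mu> * poisson_weight \<mu> i" for i
    by (simp add: poisson_weight_def field_simps del: of_nat_Suc)
  have "(\<lambda>i. \<mu> * (poisson_weight \<mu> i * g (Suc i))) sums (\<mu> * s)"
    using assms by (rule sums_mult)
  moreover have "\<mu> * (poisson_weight \<mu> i * g (Suc i))
      = poisson_weight \<mu> (Suc i) * real (Suc i) * g (Suc i)" for i
    by (simp only: step mult.assoc)
  ultimately have "(\<lambda>i. poisson_weight \<mu> (Suc i) * real (Suc i) * g (Suc i)) sums (\<mu> * s)"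
    by simp
  thus ?thesis by (subst (asm) sums_Suc_iff) simp
qed

lemma poisson_mean_sums: "(\<lambda>i. poisson_weight \<mu> i * real i) sums \<mu>"
  using poisson_stein_identity[of \<mu> "\<lambda>_. 1" 1] poisson_weight_sums by simp

lemma poisson_variance_sums: "(\<lambda>i. poisson_weight \<mu> i * (real i - \<mu>) ^ 2) sums \<mu>"
proof -
  have "(\<lambda>i. poisson_weight \<mu> i * real (Suc i)) sums (\<mu> + 1)"
    using sums_add[OF poisson_mean_sums[of \<mu>] poisson_weight_sums[of \<mu>]]
    by (simp add: algebra_simps)
  hence second: "(\<lambda>i. poisson_weight \<mu> i * real i * real i) sums (\<mu> * (\<mu> + 1))"
    by (rule poisson_stein_identity)
  have "(\<lambda>i. poisson_weight \<mu> i * real i * real i - 2 * \<mu> * (poisson_weight \<mu> i * real i)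
             + \<mu> ^ 2 * poisson_weight \<mu> i) sums (\<mu> * (\<mu> + 1) - 2 * \<mu> * \<mu> + \<mu> ^ 2 * 1)"
    by (intro sums_add sums_diff sums_mult poisson_weight_sums poisson_mean_sums second)
  thus ?thesis by (simp add: power2_eq_square algebra_simps)
qed

lemma poisson_expectation_eq:
  assumes "\<mu> > 0" and "(\<lambda>i. poisson_weight \<mu> i * f i) sums s" and "\<And>i. f i \<ge> 0"
  shows "measure_pmf.expectation (poisson_pmf \<mu>) f = s"
proof -
  have "measure_pmf.expectation (poisson_pmf \<mu>) f
      = integral\<^sup>L (count_space UNIV) (\<lambda>i. pmf (poisson_pmf \<mu>) i *\<^sub>R f i)"
    unfolding measure_pmf_eq_density by (rule integral_density) auto
  also have "\<dots> = integral\<^sup>L (count_space UNIV) (\<lambda>i. poisson_weight \<mu> i * f i)"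
    using assms(1) by (simp add: poisson_weight_def)
  also have "\<dots> = (\<Sum>i. poisson_weight \<mu> i * f i)"
  proof (rule integral_count_space_nat)
    have "norm (poisson_weight \<mu> i * f i) = poisson_weight \<mu> i * f i" for i
      using assms(1) assms(3)[of i] poisson_weight_nonneg[of \<mu> i] by simp
    thus "integrable (count_space UNIV) (\<lambda>i. poisson_weight \<mu> i * f i)"
      using sums_summable[OF assms(2)] by (simp add: integrable_count_space_nat_iff)
  qed
  also have "\<dots> = s" using assms(2) by (simp add: sums_iff)
  finally show ?thesis .
qed

lemma cos_eq_1_iff_dvd:
  assumes "a > 0"
  shows "cos (2 * pi * real t / real a) = 1 \<longleftrightarrow> a dvd t"
proof
  assume "cos (2 * pi * real t / real a) = 1"
  then obtain n :: int where "2 * pi * real t / real a = of_int n * 2 * pi"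
    using cos_one_2pi_int by blast
  hence "real t = of_int n * real a" using assms by (simp add: field_simps)
  hence "int t = n * int a" by (metis of_int_eq_iff of_int_mult of_int_of_nat_eq)
  thus "a dvd t" by (metis dvd_triv_right int_dvd_int_iff mult.commute)
next
  assume "a dvd t"
  then obtain q where "t = a * q" by blast
  hence "2 * pi * real t / real a = of_int (int q) * 2 * pi" using assms by (simp add: field_simps)
  thus "cos (2 * pi * real t / real a) = 1" using cos_one_2pi_int by blast
qed

lemma cis_root_of_unity_power: "cis (2 * pi / real a) ^ t = cis (2 * pi * real t / real a)"
  unfolding Complex.DeMoivre by (rule arg_cong[where f = cis]) (simp add: field_simps)

lemma root_of_unity_filter:
  assumes "a > 0"
  shows "(\<Sum>m<a. (cis (2 * pi / real a) ^ t) ^ m) = (if a dvd t then of_nat a else 0)"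
proof -
  define z where "z = cis (2 * pi / real a) ^ t"
  have z: "z = cis (2 * pi * real t / real a)"
    by (simp add: z_def cis_root_of_unity_power)
  show ?thesis
  proof (cases "a dvd t")
    case True
    hence "cos (2 * pi * real t / real a) = 1" using cos_eq_1_iff_dvd[OF assms] by simp
    hence "z = 1" unfolding z using sin_cos_squared_add[of "2 * pi * real t / real a"]
      by (simp add: complex_eq_iff)
    thus ?thesis using True by (simp add: z_def)
  next
    case False
    hence "Re z \<noteq> 1" unfolding z using cos_eq_1_iff_dvd[OF assms] by simp
    hence "z \<noteq> 1" by auto
    have "z ^ a = cis (2 * pi * real t)"
      unfolding z Complex.DeMoivre using assms by (simp add: field_simps)
    also have "\<dots> = 1" by (metis Ints_of_nat cis_multiple_2pi)
    finally have "z ^ a = 1" .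
    hence "(\<Sum>m<a. z ^ m) = 0" using \<open>z \<noteq> 1\<close> by (simp add: geometric_sum)
    thus ?thesis using False by (simp add: z_def)
  qed
qed

(* The exponent shift used to select the residue class j with the filter above. *)
lemma dvd_shift_iff_mod:
  fixes a i j :: nat assumes "j < a"
  shows "a dvd (i + (a - j)) \<longleftrightarrow> i mod a = j"
proof -
  have "a dvd (i + (a - j)) \<longleftrightarrow> a dvd ((i + a) - j)" using assms by simp
  also have "\<dots> \<longleftrightarrow> (i + a) mod a = j mod a" using assms by (intro mod_eq_dvd_iff_nat[symmetric]) simp
  finally show ?thesis using assms by simp
qed

definition residue_prob :: "nat \<Rightarrow> nat \<Rightarrow> real \<Rightarrow> real" where
  "residue_prob a j \<mu> = (\<Sum>i. poisson_weight \<mu> i * (if i mod a = j then 1 else 0))"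

(* Roots-of-unity filter applied to the generating function
   sum_i P(N = i) z^i = exp (mu (z - 1)): the residue class probability is an average of
   a exponentials, the term m = 0 contributing exactly 1/a. *)
lemma residue_prob_fourier_sums:
  fixes a j :: nat assumes a: "a > 0" and j: "j < a"
  defines "\<zeta> \<equiv> cis (2 * pi / real a)"
  shows "(\<lambda>i. complex_of_real (poisson_weight \<mu> i * (if i mod a = j then 1 else 0))) sums
           ((\<Sum>m<a. (\<zeta> ^ (a - j)) ^ m * exp (of_real \<mu> * (\<zeta> ^ m - 1))) / of_nat a)"
proof -
  have generating: "(\<lambda>i. (\<zeta> ^ (a - j)) ^ m * (of_real (poisson_weight \<mu> i) * (\<zeta> ^ m) ^ i)) sums
                      ((\<zeta> ^ (a - j)) ^ m * exp (of_real \<mu> * (\<zeta> ^ m - 1)))" for m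
  proof -
    have "(\<lambda>i. (of_real \<mu> * \<zeta> ^ m) ^ i /\<^sub>R fact i) sums exp (of_real \<mu> * \<zeta> ^ m)"
      by (rule exp_converges)
    hence "(\<lambda>i. (\<zeta> ^ (a - j)) ^ m * exp (- of_real \<mu>) * ((of_real \<mu> * \<zeta> ^ m) ^ i /\<^sub>R fact i)) sums
             ((\<zeta> ^ (a - j)) ^ m * exp (- of_real \<mu>) * exp (of_real \<mu> * \<zeta> ^ m))"
      by (rule sums_mult)
    moreover have "exp (- of_real \<mu>) * exp (of_real \<mu> * \<zeta> ^ m) = exp (of_real \<mu> * (\<zeta> ^ m - 1))"
      by (simp add: exp_add[symmetric] algebra_simps)
    moreover have "(\<zeta> ^ (a - j)) ^ m * exp (- of_real \<mu>) * ((of_real \<mu> * \<zeta> ^ m) ^ i /\<^sub>R fact i)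
        = (\<zeta> ^ (a - j)) ^ m * (of_real (poisson_weight \<mu> i) * (\<zeta> ^ m) ^ i)" for i
      by (simp add: poisson_weight_def scaleR_conv_of_real power_mult_distrib
                    exp_of_real[symmetric] field_simps)
    ultimately show ?thesis by (simp add: mult.assoc)
  qed
  have filter: "(\<Sum>m<a. (\<zeta> ^ (a - j)) ^ m * (of_real (poisson_weight \<mu> i) * (\<zeta> ^ m) ^ i))
      = of_nat a * complex_of_real (poisson_weight \<mu> i * (if i mod a = j then 1 else 0))" for i
  proof -
    have "(\<Sum>m<a. (\<zeta> ^ (a - j)) ^ m * (of_real (poisson_weight \<mu> i) * (\<zeta> ^ m) ^ i))
        = of_real (poisson_weight \<mu> i) * (\<Sum>m<a. (\<zeta> ^ (i + (a - j))) ^ m)"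
      by (simp add: sum_distrib_left power_mult[symmetric] power_add[symmetric] algebra_simps)
    also have "(\<Sum>m<a. (\<zeta> ^ (i + (a - j))) ^ m) = (if a dvd (i + (a - j)) then of_nat a else 0)"
      unfolding \<zeta>_def by (rule root_of_unity_filter[OF a])
    finally show ?thesis using dvd_shift_iff_mod[OF j, of i] by simp
  qed
  have "(\<lambda>i. \<Sum>m<a. (\<zeta> ^ (a - j)) ^ m * (of_real (poisson_weight \<mu> i) * (\<zeta> ^ m) ^ i)) sums
          (\<Sum>m<a. (\<zeta> ^ (a - j)) ^ m * exp (of_real \<mu> * (\<zeta> ^ m - 1)))"
    by (rule sums_sum) (rule generating)
  hence "(\<lambda>i. of_nat a * complex_of_real (poisson_weight \<mu> i * (if i mod a = j then 1 else 0))) sums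
           (\<Sum>m<a. (\<zeta> ^ (a - j)) ^ m * exp (of_real \<mu> * (\<zeta> ^ m - 1)))"
    by (simp only: filter)
  from sums_divide[OF this, of "of_nat a"] show ?thesis using a by simp
qed

lemma residue_prob_sums:
  assumes "a > 0" and "j < a"
  shows "(\<lambda>i. poisson_weight \<mu> i * (if i mod a = j then 1 else 0)) sums residue_prob a j \<mu>"
  unfolding residue_prob_def
  using sums_summable[OF sums_Re[OF residue_prob_fourier_sums[OF assms, of \<mu>]]]
  by (intro summable_sums) simp

(* Each term m = 1, ..., a - 1 decays like exp (-mu (1 - cos (2 pi m / a))), so residue
   classes are equidistributed up to an exponentially small error. *)
lemma residue_prob_deviation_bound:
  fixes a j :: nat assumes a: "a > 0" and j: "j < a"
  shows "\<bar>real a * residue_prob a j \<mu> - 1\<bar>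
           \<le> (\<Sum>m\<in>{1..<a}. exp (- \<mu> * (1 - cos (2 * pi * real m / real a))))"
proof -
  define \<zeta> where "\<zeta> = cis (2 * pi / real a)"
  define summand where "summand m = (\<zeta> ^ (a - j)) ^ m * exp (of_real \<mu> * (\<zeta> ^ m - 1))" for m
  have split: "(\<Sum>m<a. summand m) = 1 + (\<Sum>m\<in>{1..<a}. summand m)"
  proof -
    have "{..<a} = insert 0 {1..<a}" using a by auto
    thus ?thesis by (simp add: summand_def)
  qed
  have "(\<lambda>i. poisson_weight \<mu> i * (if i mod a = j then 1 else 0)) sums ((1 + Re (\<Sum>m\<in>{1..<a}. summand m)) / real a)"
    using sums_Re[OF residue_prob_fourier_sums[OF a j, of \<mu>]]
    by (simp add: \<zeta>_def[symmetric] summand_def[symmetric] split)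
  hence "real a * residue_prob a j \<mu> - 1 = Re (\<Sum>m\<in>{1..<a}. summand m)"
    using a unfolding residue_prob_def by (simp add: sums_iff)
  also have "\<bar>\<dots>\<bar> \<le> norm (\<Sum>m\<in>{1..<a}. summand m)" by (rule abs_Re_le_cmod)
  also have "\<dots> \<le> (\<Sum>m\<in>{1..<a}. norm (summand m))" by (rule norm_sum)
  also have "\<dots> = (\<Sum>m\<in>{1..<a}. exp (- \<mu> * (1 - cos (2 * pi * real m / real a))))"
  proof (rule sum.cong)
    fix m
    have "Re (\<zeta> ^ m) = cos (2 * pi * real m / real a)"
      by (simp add: \<zeta>_def cis_root_of_unity_power)
    moreover have "norm ((\<zeta> ^ (a - j)) ^ m) = 1" by (simp add: \<zeta>_def norm_power)
    ultimately show "norm (summand m) = exp (- \<mu> * (1 - cos (2 * pi * real m / real a)))"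
      by (simp add: summand_def norm_mult algebra_simps)
  qed simp
  finally show ?thesis .
qed

(* The error is exponentially small, in particular o(1/mu); this is what makes
   Cov(N, N mod a) vanish. *)
lemma residue_prob_deviation_vanishes:
  assumes a: "a > 0" and j: "j < a"
  shows "((\<lambda>\<mu>. \<mu> * (real a * residue_prob a j \<mu> - 1)) \<longlongrightarrow> 0) at_top"
proof (rule Lim_null_comparison)
  define c where "c m = 1 - cos (2 * pi * real m / real a)" for m
  show "eventually (\<lambda>\<mu>. norm (\<mu> * (real a * residue_prob a j \<mu> - 1))
          \<le> (\<Sum>m\<in>{1..<a}. \<mu> * exp (\<mu> * (- c m)))) at_top"
    using eventually_ge_at_top[of "0::real"]
  proof eventually_elim
    case (elim \<mu>)
    have "norm (\<mu> * (real a * residue_prob a j \<mu> - 1)) = \<mu> * \<bar>real a * residue_prob a j \<mu> - 1\<bar>"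
      using elim by (simp add: abs_mult)
    also have "\<dots> \<le> \<mu> * (\<Sum>m\<in>{1..<a}. exp (- \<mu> * c m))"
      using elim residue_prob_deviation_bound[OF a j, of \<mu>]
      by (intro mult_left_mono) (simp_all add: c_def)
    finally show ?case by (simp add: sum_distrib_left)
  qed
  show "((\<lambda>\<mu>. \<Sum>m\<in>{1..<a}. \<mu> * exp (\<mu> * (- c m))) \<longlongrightarrow> 0) at_top"
  proof (rule tendsto_null_sum)
    fix m assume "m \<in> {1..<a}"
    hence "\<not> a dvd m" by (auto dest: dvd_imp_le)
    hence "cos (2 * pi * real m / real a) \<noteq> 1" using cos_eq_1_iff_dvd[OF a] by simp
    moreover have "cos (2 * pi * real m / real a) \<le> 1" by simp
    ultimately have "c m > 0" unfolding c_def by linarith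
    thus "((\<lambda>\<mu>. \<mu> * exp (\<mu> * (- c m))) \<longlongrightarrow> 0) at_top" by real_asymp
  qed
qed

lemma residue_prob_limit:
  assumes a: "a > 0" and j: "j < a"
  shows "((\<lambda>\<mu>. residue_prob a j \<mu>) \<longlongrightarrow> 1 / real a) at_top"
proof -
  have "((\<lambda>\<mu>. (1 + \<mu> * (real a * residue_prob a j \<mu> - 1) * (1 / \<mu>)) / real a)
          \<longlongrightarrow> (1 + 0 * 0) / real a) at_top"
    by (intro tendsto_intros residue_prob_deviation_vanishes[OF a j]
              tendsto_divide_0[OF tendsto_const] filterlim_at_top_imp_at_infinity filterlim_ident)
       (use a in simp)
  moreover have "eventually (\<lambda>\<mu>. (1 + \<mu> * (real a * residue_prob a j \<mu> - 1) * (1 / \<mu>)) / real a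
                   = residue_prob a j \<mu>) at_top"
    using eventually_gt_at_top[of "0::real"] by eventually_elim (use a in \<open>simp add: field_simps\<close>)
  ultimately show ?thesis by (simp add: tendsto_cong)
qed

lemma residue_function_sums:
  fixes f :: "nat \<Rightarrow> real" assumes a: "a > 0"
  shows "(\<lambda>i. poisson_weight \<mu> i * f (i mod a)) sums (\<Sum>j<a. f j * residue_prob a j \<mu>)"
proof -
  have "(\<lambda>i. \<Sum>j<a. f j * (poisson_weight \<mu> i * (if i mod a = j then 1 else 0))) sums
          (\<Sum>j<a. f j * residue_prob a j \<mu>)"
    by (intro sums_sum sums_mult residue_prob_sums a) simp
  moreover have "(\<Sum>j<a. f j * (poisson_weight \<mu> i * (if i mod a = j then 1 else 0)))
                   = poisson_weight \<mu> i * f (i mod a)" for i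
  proof -
    have "(\<Sum>j<a. f j * (poisson_weight \<mu> i * (if i mod a = j then 1 else 0)))
            = (\<Sum>j<a. if i mod a = j then poisson_weight \<mu> i * f j else 0)"
      by (intro sum.cong) auto
    also have "\<dots> = poisson_weight \<mu> i * f (i mod a)" using a by (subst sum.delta') auto
    finally show ?thesis .
  qed
  ultimately show ?thesis by simp
qed

(* E[(N + 1) mod a - N mod a] = 1 - a P(N mod a = a - 1): the residue grows by one
   except when it wraps around. *)
lemma residue_increment_sums:
  assumes a: "a > 0"
  shows "(\<lambda>i. poisson_weight \<mu> i * (real (Suc i mod a) - real (i mod a)))
           sums (1 - real a * residue_prob a (a - 1) \<mu>)"
proof -
  have "(\<lambda>i. poisson_weight \<mu> i - real a * (poisson_weight \<mu> i * (if i mod a = a - 1 then 1 else 0)))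
          sums (1 - real a * residue_prob a (a - 1) \<mu>)"
    by (intro sums_diff sums_mult poisson_weight_sums residue_prob_sums a) (use a in simp)
  moreover have "poisson_weight \<mu> i - real a * (poisson_weight \<mu> i * (if i mod a = a - 1 then 1 else 0))
                   = poisson_weight \<mu> i * (real (Suc i mod a) - real (i mod a))" for i
  proof -
    have d: "real (Suc i mod a) - real (i mod a) = 1 - real a * (if i mod a = a - 1 then 1 else 0)"
      using a mod_less_divisor[OF a, of i] by (auto simp: mod_Suc of_nat_diff)
    show ?thesis unfolding d by (simp only: right_diff_distrib mult_1_right mult.left_commute)
  qed
  ultimately show ?thesis by (simp only:)
qed

definition residue_moment :: "nat \<Rightarrow> nat \<Rightarrow> real \<Rightarrow> real" where
  "residue_moment a k \<mu> = (\<Sum>j<a. real j ^ k * residue_prob a j \<mu>)"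

lemma residue_moment_sums:
  assumes "a > 0"
  shows "(\<lambda>i. poisson_weight \<mu> i * real (i mod a) ^ k) sums residue_moment a k \<mu>"
  unfolding residue_moment_def using residue_function_sums[OF assms, of \<mu> "\<lambda>j. real j ^ k"] by simp

lemma residue_covariance_sums:
  fixes \<mu> :: real assumes a: "a > 0"
  defines "C \<equiv> residue_moment a 1 \<mu>"
  shows "(\<lambda>i. poisson_weight \<mu> i * (real i - \<mu>) * (real (i mod a) - C))
           sums (\<mu> * (1 - real a * residue_prob a (a - 1) \<mu>))"
proof -
  have R: "(\<lambda>i. poisson_weight \<mu> i * real (i mod a)) sums C"
    using residue_moment_sums[OF a, of \<mu> 1] by (simp add: C_def)
  have "(\<lambda>i. poisson_weight \<mu> i * real (Suc i mod a)) sums ((1 - real a * residue_prob a (a - 1) \<mu>) + C)"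
    using sums_add[OF residue_increment_sums[OF a, of \<mu>] R] by (simp add: algebra_simps)
  hence NR: "(\<lambda>i. poisson_weight \<mu> i * real i * real (i mod a))
               sums (\<mu> * ((1 - real a * residue_prob a (a - 1) \<mu>) + C))"
    by (rule poisson_stein_identity)
  have "(\<lambda>i. poisson_weight \<mu> i * real i * real (i mod a) - C * (poisson_weight \<mu> i * real i)
             - \<mu> * (poisson_weight \<mu> i * real (i mod a)) + \<mu> * C * poisson_weight \<mu> i)
          sums (\<mu> * ((1 - real a * residue_prob a (a - 1) \<mu>) + C) - C * \<mu> - \<mu> * C + \<mu> * C * 1)"
    by (intro sums_add sums_diff sums_mult poisson_weight_sums poisson_mean_sums NR R)
  thus ?thesis by (simp add: algebra_simps)
qed

(* Mean and variance of the block index 1 + N div a, written through the residue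
   statistics; the variance is (Var N - 2 Cov(N, R) + Var R) / a^2 with R = N mod a. *)
definition block_mean :: "nat \<Rightarrow> real \<Rightarrow> real" where
  "block_mean a \<mu> = 1 + (\<mu> - residue_moment a 1 \<mu>) / real a"

definition block_variance :: "nat \<Rightarrow> real \<Rightarrow> real" where
  "block_variance a \<mu> = (\<mu> - 2 * \<mu> * (1 - real a * residue_prob a (a - 1) \<mu>)
      + residue_moment a 2 \<mu> - residue_moment a 1 \<mu> ^ 2) / real a ^ 2"

lemma block_index_decomposition:
  assumes "a > 0"
  shows "real (Suc (i div a)) = 1 + (real i - real (i mod a)) / real a"
proof -
  have "real i = real a * real (i div a) + real (i mod a)"
    by (metis of_nat_add of_nat_mult div_mult_mod_eq mult.commute)
  thus ?thesis using assms by (simp add: field_simps)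
qed

lemma block_mean_sums:
  assumes a: "a > 0"
  shows "(\<lambda>i. poisson_weight \<mu> i * real (Suc (i div a))) sums block_mean a \<mu>"
proof -
  have "(\<lambda>i. poisson_weight \<mu> i + (poisson_weight \<mu> i * real i - poisson_weight \<mu> i * real (i mod a)) / real a)
          sums (1 + (\<mu> - residue_moment a 1 \<mu>) / real a)"
    using residue_moment_sums[OF a, of \<mu> 1]
    by (intro sums_add sums_divide sums_diff poisson_weight_sums poisson_mean_sums) simp_all
  moreover have "poisson_weight \<mu> i + (poisson_weight \<mu> i * real i - poisson_weight \<mu> i * real (i mod a)) / real a
                   = poisson_weight \<mu> i * real (Suc (i div a))" for i
    unfolding block_index_decomposition[OF a] by (simp add: field_simps)
  ultimately show ?thesis unfolding block_mean_def by (simp only:)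
qed

lemma block_variance_sums:
  assumes a: "a > 0"
  shows "(\<lambda>i. poisson_weight \<mu> i * (real (Suc (i div a)) - block_mean a \<mu>) ^ 2) sums block_variance a \<mu>"
proof -
  define C where "C = residue_moment a 1 \<mu>"
  have R: "(\<lambda>i. poisson_weight \<mu> i * real (i mod a)) sums C"
    using residue_moment_sums[OF a, of \<mu> 1] by (simp add: C_def)
  have residue_variance: "(\<lambda>i. poisson_weight \<mu> i * (real (i mod a) - C) ^ 2) sums (residue_moment a 2 \<mu> - C ^ 2)"
  proof -
    have "(\<lambda>i. poisson_weight \<mu> i * real (i mod a) ^ 2 - 2 * C * (poisson_weight \<mu> i * real (i mod a))
               + C ^ 2 * poisson_weight \<mu> i) sums (residue_moment a 2 \<mu> - 2 * C * C + C ^ 2 * 1)"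
      by (intro sums_add sums_diff sums_mult poisson_weight_sums residue_moment_sums a R)
    thus ?thesis by (simp add: power2_eq_square algebra_simps)
  qed
  have "(\<lambda>i. (poisson_weight \<mu> i * (real i - \<mu>) ^ 2
              - 2 * (poisson_weight \<mu> i * (real i - \<mu>) * (real (i mod a) - C))
              + poisson_weight \<mu> i * (real (i mod a) - C) ^ 2) / real a ^ 2)
        sums ((\<mu> - 2 * (\<mu> * (1 - real a * residue_prob a (a - 1) \<mu>)) + (residue_moment a 2 \<mu> - C ^ 2)) / real a ^ 2)"
    unfolding C_def
    by (intro sums_divide sums_add sums_diff sums_mult poisson_variance_sums
              residue_covariance_sums[OF a] residue_variance[unfolded C_def])
  moreover have "(poisson_weight \<mu> i * (real i - \<mu>) ^ 2
              - 2 * (poisson_weight \<mu> i * (real i - \<mu>) * (real (i mod a) - C))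
              + poisson_weight \<mu> i * (real (i mod a) - C) ^ 2) / real a ^ 2
      = poisson_weight \<mu> i * (real (Suc (i div a)) - block_mean a \<mu>) ^ 2" for i
  proof -
    have d: "real (Suc (i div a)) - block_mean a \<mu> = ((real i - \<mu>) - (real (i mod a) - C)) / real a"
      unfolding block_index_decomposition[OF a] using a by (simp add: block_mean_def C_def field_simps)
    show ?thesis unfolding d using a by (simp add: power2_eq_square field_simps)
  qed
  moreover have "(\<mu> - 2 * (\<mu> * (1 - real a * residue_prob a (a - 1) \<mu>)) + (residue_moment a 2 \<mu> - C ^ 2))
                  / real a ^ 2 = block_variance a \<mu>"
    by (simp add: block_variance_def C_def algebra_simps)
  ultimately show ?thesis by (simp only:)
qed

lemma discrete_uniform_variance:
  assumes "a > 0"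
  shows "(\<Sum>j<a. real j ^ 2) / real a - ((\<Sum>j<a. real j) / real a) ^ 2 = (real a ^ 2 - 1) / 12"
proof -
  have sum1: "(\<Sum>j<n. real j) = real n * (real n - 1) / 2" for n
    by (induction n) (simp_all add: field_simps)
  have sum2: "(\<Sum>j<n. real j ^ 2) = real n * (real n - 1) * (2 * real n - 1) / 6" for n
    by (induction n) (simp_all add: field_simps power2_eq_square)
  show ?thesis unfolding sum1 sum2 using assms by (simp add: field_simps power2_eq_square)
qed

lemma block_variance_asymptotics:
  assumes a: "a > 0"
  shows "((\<lambda>\<mu>. block_variance a \<mu> - (\<mu> / real a ^ 2 + 1 / 12 * (1 - 1 / real a ^ 2))) \<longlongrightarrow> 0) at_top"
proof -
  have moment_limit: "((\<lambda>\<mu>. residue_moment a k \<mu>) \<longlongrightarrow> (\<Sum>j<a. real j ^ k) / real a) at_top" for k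
    unfolding residue_moment_def sum_divide_distrib
    by (intro tendsto_sum) (use residue_prob_limit[OF a] tendsto_mult_left in fastforce)
  have a2: "real a ^ 2 \<noteq> 0" using a by simp
  have edge: "((\<lambda>\<mu>. \<mu> * (real a * residue_prob a (a - 1) \<mu> - 1)) \<longlongrightarrow> 0) at_top"
    using residue_prob_deviation_vanishes[OF a, of "a - 1"] a by simp
  have "((\<lambda>\<mu>. (2 * (\<mu> * (real a * residue_prob a (a - 1) \<mu> - 1))
                  + residue_moment a 2 \<mu> - residue_moment a 1 \<mu> ^ 2 - (real a ^ 2 - 1) / 12) / real a ^ 2)
         \<longlongrightarrow> (2 * 0 + (\<Sum>j<a. real j ^ 2) / real a - ((\<Sum>j<a. real j ^ 1) / real a) ^ 2
                 - (real a ^ 2 - 1) / 12) / real a ^ 2) at_top"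
    by (intro tendsto_intros edge moment_limit a2)
  moreover have "(2 * 0 + (\<Sum>j<a. real j ^ 2) / real a - ((\<Sum>j<a. real j ^ 1) / real a) ^ 2
                 - (real a ^ 2 - 1) / 12) / real a ^ 2 = 0"
    using discrete_uniform_variance[OF a] by simp
  moreover have "(2 * (\<mu> * (real a * residue_prob a (a - 1) \<mu> - 1))
                  + residue_moment a 2 \<mu> - residue_moment a 1 \<mu> ^ 2 - (real a ^ 2 - 1) / 12) / real a ^ 2
      = block_variance a \<mu> - (\<mu> / real a ^ 2 + 1 / 12 * (1 - 1 / real a ^ 2))" for \<mu>
    using a2 by (simp add: block_variance_def field_simps)
  ultimately show ?thesis by (simp only:)
qed

lemma first_passage_gt_iff:
  fixes Y :: "nat \<Rightarrow> 'a \<Rightarrow> real"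
  assumes nonneg: "\<And>i. i \<ge> 1 \<Longrightarrow> 0 \<le> Y i \<omega>"
    and crossing: "\<exists>n\<ge>1. b < (\<Sum>i=1..n. Y i \<omega>)" and b: "b \<ge> 0"
  shows "k < first_passage Y b \<omega> \<longleftrightarrow> (\<Sum>i=1..k. Y i \<omega>) \<le> b"
proof -
  define S where "S n = (\<Sum>i=1..n. Y i \<omega>)" for n
  define L where "L = first_passage Y b \<omega>"
  have L_least: "L = (LEAST n. n \<ge> 1 \<and> b < S n)"
    by (simp add: L_def S_def first_passage_def)
  have S_mono: "S m \<le> S n" if "m \<le> n" for m n
    unfolding S_def using that nonneg by (intro sum_mono2) auto
  have L_crosses: "L \<ge> 1 \<and> b < S L"
    unfolding L_least by (rule LeastI_ex) (use crossing in \<open>simp add: S_def\<close>)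
  have L_minimal: "L \<le> n" if "n \<ge> 1" "b < S n" for n
    unfolding L_least by (rule Least_le) (use that in simp)
  show ?thesis unfolding L_def[symmetric] S_def[symmetric]
  proof
    assume "k < L"
    show "S k \<le> b"
    proof (rule ccontr)
      assume "\<not> S k \<le> b"
      moreover have "k \<noteq> 0" using calculation b by (cases "k = 0") (auto simp: S_def)
      ultimately show False using L_minimal[of k] \<open>k < L\<close> by simp
    qed
  next
    assume "S k \<le> b"
    thus "k < L" using S_mono[of L k] L_crosses by (cases "L \<le> k") auto
  qed
qed

lemma (in prob_space) distr_nat_eq_pmf_by_tails:
  fixes T :: "'a \<Rightarrow> nat" and Q :: "nat pmf"
  assumes T: "T \<in> measurable M (count_space UNIV)"
    and tails: "\<And>n. prob {\<omega> \<in> space M. n < T \<omega>} = measure Q {n<..}"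
  shows "distr M (count_space UNIV) T = measure_pmf Q"
proof (rule measure_eqI_countable[where A = UNIV])
  fix k :: nat
  have at_least: "prob {\<omega> \<in> space M. k \<le> T \<omega>} = measure Q {k..}"
  proof (cases k)
    case 0
    thus ?thesis using prob_space measure_pmf.prob_space by simp
  next
    case (Suc k')
    have "{\<omega> \<in> space M. k \<le> T \<omega>} = {\<omega> \<in> space M. k' < T \<omega>}" "{k..} = {k'<..}"
      using Suc by auto
    thus ?thesis using tails[of k'] by simp
  qed
  have "{\<omega> \<in> space M. T \<omega> = k} = {\<omega> \<in> space M. k \<le> T \<omega>} - {\<omega> \<in> space M. k < T \<omega>}"
    by auto
  hence "prob {\<omega> \<in> space M. T \<omega> = k} = prob {\<omega> \<in> space M. k \<le> T \<omega>} - prob {\<omega> \<in> space M. k < T \<omega>}"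
    using T by (simp add: finite_measure_Diff subset_eq)
  also have "\<dots> = measure Q ({k..} - {k<..})"
    using at_least tails[of k] by (simp add: measure_pmf.finite_measure_Diff subset_eq)
  also have "{k..} - {k<..} = {k}" by auto
  finally have "prob {\<omega> \<in> space M. T \<omega> = k} = pmf Q k" by (simp add: measure_pmf_single)
  moreover have "T -` {k} \<inter> space M = {\<omega> \<in> space M. T \<omega> = k}" by auto
  ultimately show "emeasure (distr M (count_space UNIV) T) {k} = emeasure (measure_pmf Q) {k}"
    using T by (simp add: emeasure_distr emeasure_eq_measure emeasure_pmf_single)
qed auto

lemma poisson_block_tail:
  assumes "\<mu> > 0" and "a > 0"
  shows "measure (map_pmf (\<lambda>j. Suc (j div a)) (poisson_pmf \<mu>)) {n<..}
           = 1 - (\<Sum>j<n * a. poisson_weight \<mu> j)"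
proof -
  have "(\<lambda>j. Suc (j div a)) -` {n<..} = - {..<n * a}"
    using assms(2) by (auto simp: less_Suc_eq_le less_eq_div_iff_mult_less_eq)
  hence "measure (map_pmf (\<lambda>j. Suc (j div a)) (poisson_pmf \<mu>)) {n<..}
           = 1 - measure (poisson_pmf \<mu>) {..<n * a}"
    using measure_pmf.prob_compl[of "{..<n * a}" "poisson_pmf \<mu>"] by (simp add: Compl_eq_Diff_UNIV)
  also have "measure (poisson_pmf \<mu>) {..<n * a} = (\<Sum>j<n * a. poisson_weight \<mu> j)"
    using assms(1) by (simp add: measure_measure_pmf_finite poisson_weight_def)
  finally show ?thesis .
qed

(* The setting of the theorem: i.i.d. Erlang increments Y 1, Y 2, ... with shape alpha
   and rate l (erlang_density (alpha - 1) l is the Erlang density of shape alpha). *)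
locale erlang_renewal = prob_space M for M :: "'a measure" +
  fixes Y :: "nat \<Rightarrow> 'a \<Rightarrow> real" and \<alpha> :: nat and l :: real
  assumes shape_pos: "\<alpha> > 0" and rate_pos: "l > 0"
    and indep: "indep_vars (\<lambda>_. borel) Y {1..}"
    and erlang: "\<And>i. i \<ge> 1 \<Longrightarrow> distributed M lborel (Y i) (erlang_density (\<alpha> - 1) l)"
begin

lemma partial_sum_measurable[measurable]: "(\<lambda>\<omega>. \<Sum>i=1..n. Y i \<omega>) \<in> borel_measurable M"
  using distributed_measurable[OF erlang] by (intro borel_measurable_sum) auto

lemma partial_sum_erlang:
  assumes "n \<ge> 1"
  shows "distributed M lborel (\<lambda>\<omega>. \<Sum>i=1..n. Y i \<omega>) (erlang_density (n * \<alpha> - 1) l)"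
proof -
  have "distributed M lborel (\<lambda>\<omega>. \<Sum>i\<in>{1..n}. Y i \<omega>) (erlang_density ((\<Sum>i\<in>{1..n}. Suc (\<alpha> - 1)) - 1) l)"
    using assms rate_pos erlang by (intro erlang_distributed_sum indep_vars_subset[OF indep]) auto
  moreover have "(\<Sum>i\<in>{1..n}. Suc (\<alpha> - 1)) = n * \<alpha>" using shape_pos by simp
  ultimately show ?thesis by simp
qed

(* P(S_n <= b) = P(N < n alpha) with N ~ Poisson(l b): the Erlang/Poisson duality. *)
lemma partial_sum_le_prob:
  assumes b: "b \<ge> 0"
  shows "prob {\<omega> \<in> space M. (\<Sum>i=1..n. Y i \<omega>) \<le> b} = 1 - (\<Sum>j<n * \<alpha>. poisson_weight (l * b) j)"
proof (cases "n = 0")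
  case True
  thus ?thesis using b by (simp add: prob_space)
next
  case False
  hence "prob {\<omega> \<in> space M. (\<Sum>i=1..n. Y i \<omega>) \<le> b} = erlang_CDF (n * \<alpha> - 1) l b"
    using erlang_distributed_le[OF partial_sum_erlang rate_pos, of n b] False b by simp
  also have "\<dots> = 1 - (\<Sum>j\<le>n * \<alpha> - 1. poisson_weight (l * b) j)"
    using b by (simp add: erlang_CDF_def poisson_weight_def)
  also have "{..n * \<alpha> - 1} = {..<n * \<alpha>}" using False shape_pos by (cases "n * \<alpha>") auto
  finally show ?thesis .
qed

lemma summands_pos_AE: "AE \<omega> in M. \<forall>i\<ge>1. 0 < Y i \<omega>"
  unfolding AE_all_countable
proof
  fix i :: nat
  show "AE \<omega> in M. i \<ge> 1 \<longrightarrow> 0 < Y i \<omega>"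
  proof (cases "i \<ge> 1")
    case True
    have measurable: "{\<omega> \<in> space M. Y i \<omega> \<le> 0} \<in> sets M"
      using distributed_measurable[OF erlang[OF True]] by measurable
    have "prob {\<omega> \<in> space M. Y i \<omega> \<le> 0} = erlang_CDF (\<alpha> - 1) l 0"
      using erlang_distributed_le[OF erlang[OF True] rate_pos] by simp
    hence "{\<omega> \<in> space M. Y i \<omega> \<le> 0} \<in> null_sets M"
      using measurable by (simp add: null_sets_def emeasure_eq_measure erlang_CDF_at0)
    thus ?thesis by (rule AE_I') auto
  qed simp
qed

(* Almost surely the partial sums exceed b, so the passage time is a genuine minimum. *)
lemma crossing_AE:
  assumes "b \<ge> 0"
  shows "AE \<omega> in M. \<exists>n\<ge>1. b < (\<Sum>i=1..n. Y i \<omega>)"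
proof (rule AE_I')
  define N where "N = {\<omega> \<in> space M. \<forall>n\<ge>1. (\<Sum>i=1..n. Y i \<omega>) \<le> b}"
  have N: "N \<in> sets M" unfolding N_def by measurable
  have tail_lim: "(\<lambda>n. 1 - (\<Sum>j<n * \<alpha>. poisson_weight (l * b) j)) \<longlonglongrightarrow> 1 - 1"
  proof (intro tendsto_diff tendsto_const)
    have "(\<lambda>n. \<Sum>j<n. poisson_weight (l * b) j) \<longlonglongrightarrow> 1"
      using poisson_weight_sums by (simp add: sums_def)
    moreover have "strict_mono (\<lambda>n. n * \<alpha>)" using shape_pos by (intro strict_monoI) simp
    ultimately show "(\<lambda>n. \<Sum>j<n * \<alpha>. poisson_weight (l * b) j) \<longlonglongrightarrow> 1"
      using LIMSEQ_subseq_LIMSEQ by (auto simp: o_def)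
  qed
  have "prob N \<le> 1 - (\<Sum>j<n * \<alpha>. poisson_weight (l * b) j)" if "n \<ge> 1" for n
  proof -
    have "{\<omega> \<in> space M. (\<Sum>i=1..n. Y i \<omega>) \<le> b} \<in> sets M" by measurable
    hence "prob N \<le> prob {\<omega> \<in> space M. (\<Sum>i=1..n. Y i \<omega>) \<le> b}"
      using that by (intro finite_measure_mono) (auto simp: N_def)
    thus ?thesis using partial_sum_le_prob[OF assms] by simp
  qed
  hence "prob N \<le> 0" using LIMSEQ_le_const[OF tail_lim] by auto
  hence "prob N = 0" using measure_nonneg[of M N] by linarith
  thus "N \<in> null_sets M" using N by (simp add: null_sets_def emeasure_eq_measure)
  show "{\<omega> \<in> space M. \<not> (\<exists>n\<ge>1. b < (\<Sum>i=1..n. Y i \<omega>))} \<subseteq> N"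
    by (auto simp: N_def not_less)
qed

lemma first_passage_measurable[measurable]: "first_passage Y b \<in> measurable M (count_space UNIV)"
  unfolding first_passage_def[abs_def] by measurable

lemma first_passage_tail:
  assumes b: "b \<ge> 0"
  shows "prob {\<omega> \<in> space M. n < first_passage Y b \<omega>} = 1 - (\<Sum>j<n * \<alpha>. poisson_weight (l * b) j)"
proof -
  have "prob {\<omega> \<in> space M. n < first_passage Y b \<omega>} = prob {\<omega> \<in> space M. (\<Sum>i=1..n. Y i \<omega>) \<le> b}"
  proof (rule measure_eq_AE)
    show "AE \<omega> in M. (\<omega> \<in> {\<omega> \<in> space M. n < first_passage Y b \<omega>})
                    = (\<omega> \<in> {\<omega> \<in> space M. (\<Sum>i=1..n. Y i \<omega>) \<le> b})"
      using summands_pos_AE crossing_AE[OF b]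
      by eventually_elim (use b first_passage_gt_iff[of Y _ b n] in \<open>auto simp: less_imp_le\<close>)
  qed measurable
  thus ?thesis using partial_sum_le_prob[OF b] by simp
qed

lemma first_passage_distr:
  assumes "b > 0"
  shows "distr M (count_space UNIV) (first_passage Y b)
           = measure_pmf (map_pmf (\<lambda>j. Suc (j div \<alpha>)) (poisson_pmf (l * b)))"
proof (rule distr_nat_eq_pmf_by_tails)
  fix n
  show "prob {\<omega> \<in> space M. n < first_passage Y b \<omega>}
          = measure (map_pmf (\<lambda>j. Suc (j div \<alpha>)) (poisson_pmf (l * b))) {n<..}"
    using first_passage_tail[of b n] poisson_block_tail[of "l * b" \<alpha> n] assms rate_pos shape_pos
    by simp
qed measurable

lemma first_passage_variance:
  assumes b: "b > 0"
  shows "variance (\<lambda>\<omega>. real (first_passage Y b \<omega>)) = block_variance \<alpha> (l * b)"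
proof -
  have \<mu>: "l * b > 0" using rate_pos b by simp
  have transfer: "expectation (\<lambda>\<omega>. h (first_passage Y b \<omega>))
                    = measure_pmf.expectation (poisson_pmf (l * b)) (\<lambda>j. h (Suc (j div \<alpha>)))"
    for h :: "nat \<Rightarrow> real"
  proof -
    have "expectation (\<lambda>\<omega>. h (first_passage Y b \<omega>)) = integral\<^sup>L (distr M (count_space UNIV) (first_passage Y b)) h"
      by (rule integral_distr[symmetric]) auto
    thus ?thesis by (simp add: first_passage_distr[OF b])
  qed
  have mean: "expectation (\<lambda>\<omega>. real (first_passage Y b \<omega>)) = block_mean \<alpha> (l * b)"
    using transfer[of real] poisson_expectation_eq[OF \<mu> block_mean_sums[OF shape_pos]] by simp
  show ?thesis
    using transfer[of "\<lambda>k. (real k - block_mean \<alpha> (l * b)) ^ 2"]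
          poisson_expectation_eq[OF \<mu> block_variance_sums[OF shape_pos]]
    by (simp add: mean)
qed

end

theorem corollary2:
  fixes M :: "'a measure" and Y :: "nat \<Rightarrow> 'a \<Rightarrow> real"
    and \<alpha> :: nat and l :: real
  assumes "prob_space M"
    and "\<alpha> > 1" and "l > 0"
    and "prob_space.indep_vars M (\<lambda>_. borel) Y {1..}"
    and "\<And>i. i \<ge> 1 \<Longrightarrow> distributed M lborel (Y i) (erlang_density (\<alpha> - 1) l)"
  shows "((\<lambda>b. prob_space.variance M (\<lambda>\<omega>. real (first_passage Y b \<omega>))
              - (l * b / real \<alpha> ^ 2 + (1 / 12) * (1 - 1 / real \<alpha> ^ 2)))
          \<longlongrightarrow> 0) at_top"
proof -
  interpret erlang_renewal M Y \<alpha> l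
    using assms by (simp add: erlang_renewal_def erlang_renewal_axioms_def)
  have "filterlim (\<lambda>b. l * b) at_top at_top"
    by (rule filterlim_tendsto_pos_mult_at_top[OF tendsto_const rate_pos filterlim_ident])
  hence "((\<lambda>b. block_variance \<alpha> (l * b) - (l * b / real \<alpha> ^ 2 + 1 / 12 * (1 - 1 / real \<alpha> ^ 2)))
           \<longlongrightarrow> 0) at_top"
    using filterlim_compose[OF block_variance_asymptotics[OF shape_pos]] by simp
  moreover have "eventually (\<lambda>b. block_variance \<alpha> (l * b) - (l * b / real \<alpha> ^ 2 + 1 / 12 * (1 - 1 / real \<alpha> ^ 2))
      = variance (\<lambda>\<omega>. real (first_passage Y b \<omega>)) - (l * b / real \<alpha> ^ 2 + 1 / 12 * (1 - 1 / real \<alpha> ^ 2))) at_top"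
    using eventually_gt_at_top[of "0::real"] by eventually_elim (simp add: first_passage_variance)
  ultimately show ?thesis by (rule Lim_transform_eventually)
qed

end
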